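(* Let $f$ be a transformation of a finite set $\Omega$ and let $G$ be a group of permutations of $\Omega$. If there exists $g\in G$ such that $\mathrm{rank}(fgf)=\mathrm{rank}(f)$, then there exists an idempotent $e$ in the semigroup $\langle f,G\rangle$ such that $e$ and $f$ have the same kernel.
   Context: Maps act on $\Omega$ and $fgf$ denotes "apply $f$, then $g$, then $f$". The rank of a map $h$ is $|\Omega h|$; the kernel of $h$ is the partition of $\Omega$ induced by the equivalence relation $\{(x,y): xh=yh\}$. An idempotent is a map $e$ with $e\circ e=e$. *)

theory Defs
  imports Main
begin

text \<open>Maps act on the right: x(fg) = (xf)g, i.e. fg is the HOL function g \<circ> f.
  The ground set Omega is the (finite) universe of the type.\<close>

definition rank :: "('a \<Rightarrow> 'a) \<Rightarrow> nat" where
  "rank h = card (range h)"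

definition kernel :: "('a \<Rightarrow> 'b) \<Rightarrow> 'a set set" where
  "kernel h = {{y. h y = h x} | x. True}"

definition idempotent :: "('a \<Rightarrow> 'a) \<Rightarrow> bool" where
  "idempotent e \<longleftrightarrow> e \<circ> e = e"

definition perm_group :: "('a \<Rightarrow> 'a) set \<Rightarrow> bool" where
  "perm_group G \<longleftrightarrow> id \<in> G \<and> (\<forall>g\<in>G. bij g \<and> inv g \<in> G)
     \<and> (\<forall>g\<in>G. \<forall>h\<in>G. g \<circ> h \<in> G)"

inductive_set gen_semigroup :: "('a \<Rightarrow> 'a) set \<Rightarrow> ('a \<Rightarrow> 'a) set" for S where
  base: "s \<in> S \<Longrightarrow> s \<in> gen_semigroup S"
| comp: "a \<in> gen_semigroup S \<Longrightarrow> b \<in> gen_semigroup S \<Longrightarrow> a \<circ> b \<in> gen_semigroup S"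

end

theory Submission
  imports Defs
begin

text \<open>Since g is a bijection, rank (fgf) = rank f says that f is injective on the image of
  fg, so u = fg (in HOL, g \<circ> f) is injective on its own range. Then every power of u is injective on range u,
  so every positive power of u has the kernel of u, which is the kernel of f. Some positive
  power of u is idempotent, and it lies in the semigroup generated by f and G.\<close>

lemma kernel_eqI:
  assumes "\<And>x y. h x = h y \<longleftrightarrow> k x = k y"
  shows "kernel h = kernel k"
  unfolding kernel_def using assms by simp

lemma funpow_in_gen_semigroup:
  assumes "u \<in> gen_semigroup S"
  shows "u ^^ Suc n \<in> gen_semigroup S"
proof (induction n)
  case 0
  then show ?case using assms by simp
next
  case (Suc n)
  show ?case
    unfolding funpow.simps(2)[of "Suc n"] using gen_semigroup.comp[OF assms Suc] .
qed

lemma funpow_periodic: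
  fixes u :: "'a \<Rightarrow> 'a"
  assumes period: "u ^^ (a + p) = u ^^ a" and "a \<le> m"
  shows "u ^^ (m + k * p) = u ^^ m"
proof (induction k)
  case 0
  then show ?case by simp
next
  case (Suc k)
  have "u ^^ (m + Suc k * p) = u ^^ (m - a + k * p) \<circ> u ^^ (a + p)"
    using \<open>a \<le> m\<close> by (simp add: funpow_add[symmetric] algebra_simps)
  also have "\<dots> = u ^^ (m + k * p)"
    using \<open>a \<le> m\<close> by (simp add: period funpow_add[symmetric])
  finally show ?case using Suc by simp
qed

lemma finite_funpow_idempotent:
  fixes u :: "'a::finite \<Rightarrow> 'a"
  obtains n where "idempotent (u ^^ Suc n)"
proof -
  have "\<not> inj (\<lambda>i::nat. u ^^ i)"
    using finite_imageD[of "\<lambda>i::nat. u ^^ i" UNIV] by auto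
  then obtain a b where "u ^^ a = u ^^ b" "a < b"
    unfolding inj_def by (metis linorder_neqE_nat)
  then have period: "u ^^ (a + (b - a)) = u ^^ a" by simp
  define m where "m = Suc a * (b - a)"
  have "Suc a \<le> m"
    using \<open>a < b\<close> mult_le_mono2[of 1 "b - a" "Suc a"] by (simp add: m_def)
  then have "a \<le> m" "0 < m" by simp_all
  then have "u ^^ m \<circ> u ^^ m = u ^^ m"
    using funpow_periodic[OF period, of m "Suc a"] by (simp add: funpow_add[symmetric] m_def)
  then show thesis
    using that[of "m - 1"] \<open>0 < m\<close> by (simp add: idempotent_def)
qed

lemma funpow_inj_on_range:
  assumes "inj_on u (range u)"
  shows "inj_on (u ^^ n) (range u) \<and> (u ^^ n) ` range u \<subseteq> range u"
proof (induction n)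
  case 0
  then show ?case by simp
next
  case (Suc n)
  then have "inj_on (u \<circ> u ^^ n) (range u)"
    using assms by (meson comp_inj_on inj_on_subset)
  then show ?case by (auto simp only: funpow.simps(2) image_comp[symmetric])
qed

lemma funpow_Suc_same_kernel:
  assumes "inj_on u (range u)"
  shows "(u ^^ Suc n) x = (u ^^ Suc n) y \<longleftrightarrow> u x = u y"
proof -
  have "(u ^^ Suc n) z = (u ^^ n) (u z)" for z
    by (simp only: funpow_Suc_right comp_apply)
  then show ?thesis
    using funpow_inj_on_range[OF assms, of n] by (metis rangeI inj_on_eq_iff)
qed

lemma rank_conj_eq_imp_inj_on_range:
  fixes f :: "'a::finite \<Rightarrow> 'a"
  assumes "rank (f \<circ> g \<circ> f) = rank f" and "inj g"
  shows "inj_on (g \<circ> f) (range (g \<circ> f))"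
proof -
  have "range (f \<circ> g \<circ> f) = f ` g ` range f"
    by (simp add: image_comp)
  moreover have "card (g ` range f) = card (range f)"
    using \<open>inj g\<close> by (simp add: card_image inj_on_subset)
  ultimately have "card (f ` g ` range f) = card (g ` range f)"
    using assms(1) by (simp add: rank_def)
  then have "inj_on f (g ` range f)"
    by (simp add: eq_card_imp_inj_on)
  moreover have "inj_on g (f ` g ` range f)"
    using \<open>inj g\<close> by (rule inj_on_subset) simp
  ultimately show ?thesis
    by (simp add: comp_inj_on image_comp)
qed

theorem lemma11:
  fixes f :: "'a::finite \<Rightarrow> 'a" and G :: "('a \<Rightarrow> 'a) set"
  assumes "perm_group G"
    and "\<exists>g\<in>G. rank (f \<circ> g \<circ> f) = rank f"
  shows "\<exists>e\<in>gen_semigroup (insert f G). idempotent e \<and> kernel e = kernel f"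
proof -
  obtain g where "g \<in> G" and rank_eq: "rank (f \<circ> g \<circ> f) = rank f"
    using assms(2) by blast
  then have "inj g"
    using assms(1) by (simp add: perm_group_def bij_is_inj)
  define u where "u = g \<circ> f"
  have u_inj: "inj_on u (range u)"
    unfolding u_def using rank_conj_eq_imp_inj_on_range[OF rank_eq \<open>inj g\<close>] .
  have "u \<in> gen_semigroup (insert f G)"
    unfolding u_def using \<open>g \<in> G\<close> by (blast intro: gen_semigroup.intros)
  obtain n where "idempotent (u ^^ Suc n)"
    using finite_funpow_idempotent .
  moreover have "kernel (u ^^ Suc n) = kernel f"
    using funpow_Suc_same_kernel[OF u_inj] \<open>inj g\<close>
    by (intro kernel_eqI) (simp add: u_def inj_eq)
  ultimately show ?thesis
    using funpow_in_gen_semigroup[OF \<open>u \<in> _\<close>] by blast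
qed

end
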